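(* Let $\mathcal{A}$ be an associative unital algebra over $\mathbb{C}$ containing elements $\lambda_1,\dots,\lambda_g,\mu_1,\dots,\mu_g$ such that for all $i,j$: $[\lambda_i,\lambda_j]=0$, $[\mu_i,\mu_j]=0$, and $[\lambda_i,\mu_j]=0$ whenever $i\neq j$ (the commutator $[\lambda_i,\mu_i]$ is arbitrary, e.g. $p(\lambda_i,\mu_i)$). For each $i$ let $\mathcal{A}_i\subset\mathcal A$ denote the subalgebra generated by $\lambda_i,\mu_i$ (and possibly inverses of some of its elements), so that $\mathcal A_i$ and $\mathcal A_k$ commute elementwise for $i\neq k$. Let $R_0,R_1,\dots,R_g$ be fixed expressions in two noncommuting variables with non-dynamical (scalar) coefficients, with a fixed ordering of the two variables, and set $B_{ij}=R_j(\lambda_i,\mu_i)\in\mathcal A_i$, $V_i=R_0(\lambda_i,\mu_i)\in\mathcal{A}_i$. Assume the determinant $D$ of $B$ is invertible in $\mathcal A$ and $B$ is invertible in $\mathrm{Mat}_g(\mathcal A)$, so that $(B^{-1})_{ij}=D^{-1}\Delta_{ji}$. Define $H=(H_1,\dots,H_g)^T$ by $H=-B^{-1}V$, i.e. the solution of Baxter's equations $$\sum_{j=1}^g R_j(\lambda_i,\mu_i)H_j+R_0(\lambda_i,\mu_i)=0,\qquad i=1,\dots,g,$$ with the $H_j$ placed to the right. Then $[H_i,H_j]=0$ for all $i,j\in\{1,\dots,g\}$.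
   Context: Because entries of $B$ lying in different rows commute, the determinant $D=\sum_{\sigma\in S_g}\mathrm{sgn}(\sigma)\,B_{1\sigma(1)}\cdots B_{g\sigma(g)}$ is independent of the order of the factors, and the cofactor $\Delta_{ij}$ is $(-1)^{i+j}$ times the determinant (defined the same way) of the matrix obtained from $B$ by deleting row $i$ and column $j$. *)

theory Defs
  imports Complex_Main "HOL-Combinatorics.Permutations"
begin

text \<open>A unital associative algebra over the complex numbers is modelled as a
  ring with unit together with a unital ring homomorphism from the complex
  numbers into its centre (the structure map of scalars).\<close>

definition complex_structure_map :: "(complex \<Rightarrow> 'a::ring_1) \<Rightarrow> bool" where
  "complex_structure_map sc \<longleftrightarrow>
     (\<forall>a b. sc (a + b) = sc a + sc b) \<and>
     (\<forall>a b. sc (a * b) = sc a * sc b) \<and>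
     sc 1 = 1 \<and>
     (\<forall>a x. sc a * x = x * sc a)"

definition invertible_el :: "'a::ring_1 \<Rightarrow> bool" where
  "invertible_el x \<longleftrightarrow> (\<exists>y. x * y = 1 \<and> y * x = 1)"

definition ring_inv :: "'a::ring_1 \<Rightarrow> 'a" where
  "ring_inv x = (THE y. x * y = 1 \<and> y * x = 1)"

datatype nc_expr =
    VarL | VarM | Scal complex
  | Add nc_expr nc_expr | Mul nc_expr nc_expr | Inv nc_expr

fun nc_eval :: "(complex \<Rightarrow> 'a::ring_1) \<Rightarrow> nc_expr \<Rightarrow> 'a \<Rightarrow> 'a \<Rightarrow> 'a" where
  "nc_eval sc VarL l m = l"
| "nc_eval sc VarM l m = m"
| "nc_eval sc (Scal c) l m = sc c"
| "nc_eval sc (Add e f) l m = nc_eval sc e l m + nc_eval sc f l m"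
| "nc_eval sc (Mul e f) l m = nc_eval sc e l m * nc_eval sc f l m"
| "nc_eval sc (Inv e) l m = ring_inv (nc_eval sc e l m)"

fun nc_welldef :: "(complex \<Rightarrow> 'a::ring_1) \<Rightarrow> nc_expr \<Rightarrow> 'a \<Rightarrow> 'a \<Rightarrow> bool" where
  "nc_welldef sc VarL l m = True"
| "nc_welldef sc VarM l m = True"
| "nc_welldef sc (Scal c) l m = True"
| "nc_welldef sc (Add e f) l m = (nc_welldef sc e l m \<and> nc_welldef sc f l m)"
| "nc_welldef sc (Mul e f) l m = (nc_welldef sc e l m \<and> nc_welldef sc f l m)"
| "nc_welldef sc (Inv e) l m = (nc_welldef sc e l m \<and> invertible_el (nc_eval sc e l m))"

definition nc_det :: "nat \<Rightarrow> (nat \<Rightarrow> nat \<Rightarrow> 'a::ring_1) \<Rightarrow> 'a" where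
  "nc_det g B = (\<Sum>\<sigma>\<in>{\<sigma>. \<sigma> permutes {1..g}}.
      of_int (sign \<sigma>) * prod_list (map (\<lambda>i. B i (\<sigma> i)) [1..<g+1]))"

definition is_matrix_inverse :: "nat \<Rightarrow> (nat \<Rightarrow> nat \<Rightarrow> 'a::ring_1) \<Rightarrow> (nat \<Rightarrow> nat \<Rightarrow> 'a) \<Rightarrow> bool" where
  "is_matrix_inverse g B C \<longleftrightarrow>
     (\<forall>i\<in>{1..g}. \<forall>j\<in>{1..g}.
        (\<Sum>k=1..g. B i k * C k j) = (if i = j then 1 else 0) \<and>
        (\<Sum>k=1..g. C i k * B k j) = (if i = j then 1 else 0))"

end

theory Submission
  imports Defs
begin

text \<open>Write \<open>X j l = H j * H l - H l * H j\<close>. Substituting \<open>B H = - V\<close> twice and using that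
  the entries of different rows of \<open>(B | V)\<close> commute gives, for rows \<open>p \<noteq> q\<close>,
  \<open>\<Sum>j l. B q l * B p j * X j l = V p * V q - V q * V p = 0\<close>.
  Now expand the determinant of \<open>B\<close> with columns \<open>a, b\<close> replaced by columns \<open>j, l\<close>:
  in the term of a permutation \<open>\<sigma>\<close> the rows \<open>p = \<sigma>\<inverse> a\<close>, \<open>q = \<sigma>\<inverse> b\<close> contribute
  \<open>B p j\<close> and \<open>B q l\<close>, which commute with the other factors and can be moved to the right,
  so \<open>\<Sum>j l. det(B; a \<leftarrow> j, b \<leftarrow> l) * X j l = 0\<close>. Since a matrix with two equal columns has
  vanishing determinant, only \<open>(j, l) = (a, b), (b, a)\<close> survive, leaving
  \<open>2 * det B * X a b = 0\<close>; hence \<open>X a b = 0\<close>.\<close>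

lemma invertible_el_ring_inv:
  assumes "invertible_el (y::'a::ring_1)"
  shows "y * ring_inv y = 1" "ring_inv y * y = 1"
proof -
  obtain z where z: "y * z = 1" "z * y = 1"
    using assms unfolding invertible_el_def by blast
  have "ring_inv y = z"
    unfolding ring_inv_def
  proof (rule the_equality)
    fix w assume "y * w = 1 \<and> w * y = 1"
    then have "z * (y * w) = z" and "(z * y) * w = w" using z by simp_all
    then show "w = z" by (simp add: mult.assoc)
  qed (use z in simp)
  then show "y * ring_inv y = 1" "ring_inv y * y = 1" using z by simp_all
qed

lemma commute_ring_inv:
  assumes "invertible_el (y::'a::ring_1)" "x * y = y * x"
  shows "x * ring_inv y = ring_inv y * x"
proof -
  let ?z = "ring_inv y"
  note z = invertible_el_ring_inv[OF assms(1)]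
  have "x * ?z = ?z * y * x * ?z" using z by simp
  also have "\<dots> = ?z * (x * y) * ?z" using assms(2) by (simp add: mult.assoc)
  also have "\<dots> = ?z * x * (y * ?z)" by (simp add: mult.assoc)
  also have "\<dots> = ?z * x" using z by simp
  finally show ?thesis .
qed

lemma nc_eval_commute:
  assumes sc: "complex_structure_map sc"
    and "x * l = l * x" "x * m = m * x" "nc_welldef sc e l m"
  shows "x * nc_eval sc e l m = nc_eval sc e l m * (x::'a::ring_1)"
  using assms(4)
proof (induction e)
  case (Scal c)
  then show ?case using sc unfolding complex_structure_map_def by simp
next
  case (Add e f)
  then show ?case by (simp add: algebra_simps)
next
  case (Mul e f)
  then have "x * nc_eval sc e l m * nc_eval sc f l m = nc_eval sc e l m * (x * nc_eval sc f l m)"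
    by (simp add: mult.assoc)
  also have "\<dots> = nc_eval sc e l m * nc_eval sc f l m * x"
    using Mul by (simp add: mult.assoc)
  finally show ?case by (simp add: mult.assoc)
next
  case (Inv e)
  then show ?case by (simp add: commute_ring_inv)
qed (use assms in simp_all)

lemma nc_eval_commute_nc_eval:
  assumes sc: "complex_structure_map sc"
    and "l * l' = l' * l" "l * m' = m' * l" "m * l' = l' * m" "m * m' = m' * m"
    and "nc_welldef sc e l m" "nc_welldef sc f l' m'"
  shows "nc_eval sc e l m * nc_eval sc f l' m' = nc_eval sc f l' m' * (nc_eval sc e l m :: 'a::ring_1)"
proof -
  have "l * nc_eval sc f l' m' = nc_eval sc f l' m' * l" "m * nc_eval sc f l' m' = nc_eval sc f l' m' * m"
    using assms by (auto intro: nc_eval_commute)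
  then show ?thesis
    using assms by (metis nc_eval_commute)
qed

lemma complex_structure_map_add_self_eq_0:
  fixes sc :: "complex \<Rightarrow> 'a::ring_1" and x :: 'a
  assumes "complex_structure_map sc" "x + x = 0"
  shows "x = 0"
proof -
  have "sc (1/2) + sc (1/2) = sc (1/2 + 1/2)" "sc 1 = 1"
    using assms(1) unfolding complex_structure_map_def by metis+
  then have "sc (1/2) + sc (1/2) = 1" by simp
  then have "sc (1/2) * (x + x) = x" by (metis distrib_left distrib_right mult_1_left)
  then show ?thesis using assms(2) by simp
qed

lemma prod_list_commute:
  assumes "\<forall>x\<in>set xs. x * y = y * (x::'a::monoid_mult)"
  shows "prod_list xs * y = y * prod_list xs"
  using assms
proof (induction xs)
  case (Cons a xs)
  then have "a * (prod_list xs * y) = (y * a) * prod_list xs"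
    by (simp add: mult.assoc[symmetric])
  then show ?case by (simp add: mult.assoc)
qed simp

lemma prod_list_map_removeAll:
  assumes "distinct xs" "p \<in> set xs"
    and "\<And>i. i \<in> set xs \<Longrightarrow> i \<noteq> p \<Longrightarrow> f i * f p = f p * (f i::'a::monoid_mult)"
  shows "prod_list (map f xs) = prod_list (map f (removeAll p xs)) * f p"
  using assms
proof (induction xs)
  case (Cons x xs)
  show ?case
  proof (cases "x = p")
    case True
    with Cons.prems have "prod_list (map f xs) * f p = f p * prod_list (map f xs)"
      by (intro prod_list_commute) auto
    with True Cons.prems(1) show ?thesis by simp
  next
    case False
    with Cons show ?thesis by (simp add: mult.assoc)
  qed
qed simp

lemma prod_list_map_pull_two:
  assumes "distinct xs" "p \<in> set xs" "q \<in> set xs" "p \<noteq> q"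
    and "\<And>i k. i \<in> set xs \<Longrightarrow> k \<in> set xs \<Longrightarrow> i \<noteq> k \<Longrightarrow> f i * f k = f k * (f i::'a::monoid_mult)"
  shows "prod_list (map f xs) = prod_list (map f (removeAll q (removeAll p xs))) * f q * f p"
proof -
  have "prod_list (map f xs) = prod_list (map f (removeAll p xs)) * f p"
    using assms by (intro prod_list_map_removeAll) auto
  also have "prod_list (map f (removeAll p xs)) = prod_list (map f (removeAll q (removeAll p xs))) * f q"
    using assms by (intro prod_list_map_removeAll) (auto simp: distinct_removeAll)
  finally show ?thesis .
qed

lemma nc_det_swap_columns:
  assumes "c1 \<in> {1..g}" "c2 \<in> {1..g}" "c1 \<noteq> c2"
  shows "nc_det g (\<lambda>i c. M i (transpose c1 c2 c)) = - nc_det g M"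
proof -
  let ?t = "transpose c1 c2" and ?P = "{\<sigma>. \<sigma> permutes {1..g}}"
  let ?term = "\<lambda>\<sigma>. prod_list (map (\<lambda>i. M i (\<sigma> i)) [1..<g+1])"
  have t: "?t permutes {1..g}" using assms by (simp add: permutes_swap_id)
  have sign: "sign (?t \<circ> \<sigma>) = - sign \<sigma>" if "\<sigma> \<in> ?P" for \<sigma>
    using that assms permutes_imp_permutation[OF _ that[simplified]]
    by (simp add: sign_compose sign_swap_id permutation_swap_id)
  have "nc_det g (\<lambda>i c. M i (?t c)) = (\<Sum>\<sigma>\<in>?P. of_int (sign (?t \<circ> \<sigma>)) * ?term (?t \<circ> ?t \<circ> \<sigma>))"
    unfolding nc_det_def by (subst setum_permutations_compose_left[OF t]) (simp add: o_def)
  also have "\<dots> = (\<Sum>\<sigma>\<in>?P. - (of_int (sign \<sigma>) * ?term \<sigma>))"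
    by (intro sum.cong refl) (simp add: sign o_assoc[symmetric])
  also have "\<dots> = - nc_det g M"
    unfolding nc_det_def by (simp add: sum_negf)
  finally show ?thesis .
qed

lemma nc_det_equal_columns_eq_0:
  fixes M :: "nat \<Rightarrow> nat \<Rightarrow> 'a::ring_1"
  assumes two_torsion_free: "\<And>x::'a. x + x = 0 \<Longrightarrow> x = 0"
    and "c1 \<in> {1..g}" "c2 \<in> {1..g}" "c1 \<noteq> c2" "\<And>i. M i c1 = M i c2"
  shows "nc_det g M = 0"
proof -
  have "(\<lambda>i c. M i (transpose c1 c2 c)) = M"
    using assms(5) by (intro ext) (simp add: transpose_def)
  then have "nc_det g M = - nc_det g M"
    using nc_det_swap_columns[OF assms(2-4), of M] by argo
  then have "nc_det g M + nc_det g M = 0" by (simp add: eq_neg_iff_add_eq_0)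
  then show ?thesis by (rule two_torsion_free)
qed

lemma id_upd_two_not_inj_on:
  assumes "a \<in> S" "b \<in> S" "j \<in> S" "l \<in> S" "a \<noteq> b" "\<not> (j = a \<and> l = b)" "\<not> (j = b \<and> l = a)"
  shows "\<not> inj_on (id(a := j, b := l)) S"
proof
  assume inj: "inj_on (id(a := j, b := l)) S"
  have "j \<noteq> l" using inj_onD[OF inj, of a b] assms by auto
  show False
  proof (cases "j \<in> {a, b}")
    case False
    then show False using inj_onD[OF inj, of a j] assms by auto
  next
    case True
    with \<open>j \<noteq> l\<close> assms(6,7) have "l \<notin> {a, b}" by auto
    then show False using inj_onD[OF inj, of b l] assms by auto
  qed
qed
lemma nc_det_replace_two_columns:
  fixes B :: "nat \<Rightarrow> nat \<Rightarrow> 'a::ring_1"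
  assumes two_torsion_free: "\<And>x::'a. x + x = 0 \<Longrightarrow> x = 0"
    and ab: "a \<in> {1..g}" "b \<in> {1..g}" "a \<noteq> b" and jl: "j \<in> {1..g}" "l \<in> {1..g}"
  shows "nc_det g (\<lambda>i c. B i ((id(a := j, b := l)) c)) =
    (if j = a \<and> l = b then nc_det g B else if j = b \<and> l = a then - nc_det g B else 0)"
proof -
  let ?\<tau> = "id(a := j, b := l)"
  consider (same) "j = a \<and> l = b" | (swapped) "j = b \<and> l = a"
    | (neither) "\<not> (j = a \<and> l = b)" "\<not> (j = b \<and> l = a)"
    by blast
  then show ?thesis
  proof cases
    case same
    then have "?\<tau> = id" by auto
    then show ?thesis using same by simp
  next
    case swapped
    then have "?\<tau> = transpose a b" by (auto simp: fun_eq_iff transpose_def)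
    then show ?thesis using swapped ab nc_det_swap_columns[OF ab, of B] by simp
  next
    case neither
    then obtain c1 c2 where "c1 \<in> {1..g}" "c2 \<in> {1..g}" "c1 \<noteq> c2" "?\<tau> c1 = ?\<tau> c2"
      using id_upd_two_not_inj_on[OF ab(1,2) jl ab(3)] unfolding inj_on_def by blast
    then have "nc_det g (\<lambda>i c. B i (?\<tau> c)) = 0"
      by (intro nc_det_equal_columns_eq_0[OF two_torsion_free, of c1 g c2]) simp_all
    with neither show ?thesis by argo
  qed
qed

lemma prod_list_replace_two_columns:
  fixes B :: "nat \<Rightarrow> nat \<Rightarrow> 'a::ring_1"
  assumes rows: "\<And>i k j l. i \<in> {1..g} \<Longrightarrow> k \<in> {1..g} \<Longrightarrow> i \<noteq> k \<Longrightarrow> j \<in> {1..g} \<Longrightarrow> l \<in> {1..g}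
      \<Longrightarrow> B i j * B k l = B k l * B i j"
    and \<sigma>: "\<sigma> permutes {1..g}"
    and ab: "a \<in> {1..g}" "b \<in> {1..g}" "a \<noteq> b" and jl: "j \<in> {1..g}" "l \<in> {1..g}"
  shows "prod_list (map (\<lambda>i. B i ((id(a := j, b := l)) (\<sigma> i))) [1..<g+1])
    = prod_list (map (\<lambda>i. B i (\<sigma> i)) (removeAll (inv \<sigma> b) (removeAll (inv \<sigma> a) [1..<g+1])))
      * B (inv \<sigma> b) l * B (inv \<sigma> a) j"
proof -
  define p q where "p = inv \<sigma> a" and "q = inv \<sigma> b"
  define rest where "rest = removeAll q (removeAll p [1..<g+1])"
  define f where "f i = B i ((id(a := j, b := l)) (\<sigma> i))" for i
  have "p \<in> {1..g}" "q \<in> {1..g}"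
    unfolding p_def q_def using permutes_in_image[OF permutes_inv[OF \<sigma>]] ab by simp_all
  moreover have "\<sigma> p = a" "\<sigma> q = b"
    unfolding p_def q_def using permutes_inverses(1)[OF \<sigma>] by simp_all
  ultimately have pq: "p \<in> {1..g}" "q \<in> {1..g}" "\<sigma> p = a" "\<sigma> q = b" "p \<noteq> q"
    using ab(3) by auto
  have f_row: "(id(a := j, b := l)) (\<sigma> i) \<in> {1..g}" if "i \<in> {1..g}" for i
    using permutes_in_image[OF \<sigma>] that jl by auto
  have "prod_list (map f [1..<g+1]) = prod_list (map f rest) * f q * f p"
    unfolding rest_def f_def[abs_def]
  proof (rule prod_list_map_pull_two)
    fix i k assume "i \<in> set [1..<g+1]" "k \<in> set [1..<g+1]" "i \<noteq> k"
    then have ik: "i \<in> {1..g}" "k \<in> {1..g}" by auto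
    show "B i ((id(a := j, b := l)) (\<sigma> i)) * B k ((id(a := j, b := l)) (\<sigma> k))
        = B k ((id(a := j, b := l)) (\<sigma> k)) * B i ((id(a := j, b := l)) (\<sigma> i))"
      by (rule rows[OF ik \<open>i \<noteq> k\<close> f_row[OF ik(1)] f_row[OF ik(2)]])
  qed (use pq in auto)
  moreover have "map f rest = map (\<lambda>i. B i (\<sigma> i)) rest"
  proof (rule map_cong[OF refl])
    fix i assume "i \<in> set rest"
    then have "\<sigma> i \<noteq> a" "\<sigma> i \<noteq> b"
      unfolding rest_def using pq permutes_inj[OF \<sigma>] by (auto simp: inj_eq)
    then show "f i = B i (\<sigma> i)" unfolding f_def by simp
  qed
  moreover have "f q = B q l" "f p = B p j"
    unfolding f_def using pq ab(3) by simp_all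
  ultimately show ?thesis
    unfolding f_def[abs_def] rest_def p_def q_def by metis
qed

lemma sum_nc_det_replace_two_columns_eq_0:
  fixes B X :: "nat \<Rightarrow> nat \<Rightarrow> 'a::ring_1"
  assumes rows: "\<And>i k j l. i \<in> {1..g} \<Longrightarrow> k \<in> {1..g} \<Longrightarrow> i \<noteq> k \<Longrightarrow> j \<in> {1..g} \<Longrightarrow> l \<in> {1..g}
      \<Longrightarrow> B i j * B k l = B k l * B i j"
    and contraction: "\<And>p q. p \<in> {1..g} \<Longrightarrow> q \<in> {1..g} \<Longrightarrow> p \<noteq> q \<Longrightarrow>
      (\<Sum>j=1..g. \<Sum>l=1..g. B q l * B p j * X j l) = 0"
    and ab: "a \<in> {1..g}" "b \<in> {1..g}" "a \<noteq> b"
  shows "(\<Sum>j=1..g. \<Sum>l=1..g. nc_det g (\<lambda>i c. B i ((id(a := j, b := l)) c)) * X j l) = 0"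
proof -
  let ?P = "{\<sigma>. \<sigma> permutes {1..g}}"
  define T where "T \<sigma> j l = prod_list (map (\<lambda>i. B i ((id(a := j, b := l)) (\<sigma> i))) [1..<g+1])" for \<sigma> j l
  have T_sum: "(\<Sum>j=1..g. \<Sum>l=1..g. T \<sigma> j l * X j l) = 0" if \<sigma>: "\<sigma> permutes {1..g}" for \<sigma>
  proof -
    define p q where "p = inv \<sigma> a" and "q = inv \<sigma> b"
    define Q where "Q = prod_list (map (\<lambda>i. B i (\<sigma> i)) (removeAll q (removeAll p [1..<g+1])))"
    have pq: "p \<in> {1..g}" "q \<in> {1..g}" "p \<noteq> q"
      unfolding p_def q_def using permutes_in_image[OF permutes_inv[OF \<sigma>]] ab
        permutes_inj[OF permutes_inv[OF \<sigma>]] by (simp_all add: inj_eq)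
    have "(\<Sum>j=1..g. \<Sum>l=1..g. T \<sigma> j l * X j l)
        = (\<Sum>j=1..g. \<Sum>l=1..g. Q * (B q l * B p j * X j l))"
      unfolding T_def Q_def p_def q_def
      by (intro sum.cong refl, subst prod_list_replace_two_columns[OF rows \<sigma> ab]) (simp_all add: mult.assoc)
    also have "\<dots> = Q * (\<Sum>j=1..g. \<Sum>l=1..g. B q l * B p j * X j l)"
      by (simp add: sum_distrib_left)
    also have "\<dots> = 0" using contraction pq by simp
    finally show ?thesis .
  qed
  have "(\<Sum>j=1..g. \<Sum>l=1..g. nc_det g (\<lambda>i c. B i ((id(a := j, b := l)) c)) * X j l)
      = (\<Sum>j=1..g. \<Sum>l=1..g. \<Sum>\<sigma>\<in>?P. of_int (sign \<sigma>) * (T \<sigma> j l * X j l))"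
    unfolding nc_det_def T_def by (simp add: sum_distrib_right mult.assoc)
  also have "\<dots> = (\<Sum>j=1..g. \<Sum>\<sigma>\<in>?P. \<Sum>l=1..g. of_int (sign \<sigma>) * (T \<sigma> j l * X j l))"
    by (rule sum.cong[OF refl]) (rule sum.swap)
  also have "\<dots> = (\<Sum>\<sigma>\<in>?P. of_int (sign \<sigma>) * (\<Sum>j=1..g. \<Sum>l=1..g. T \<sigma> j l * X j l))"
    by (subst sum.swap) (simp add: sum_distrib_left)
  also have "\<dots> = 0" using T_sum by simp
  finally show ?thesis .
qed

lemma is_matrix_inverse_mult_vector:
  assumes "is_matrix_inverse g B C" "i \<in> {1..g}"
  shows "(\<Sum>j=1..g. B i j * (\<Sum>l=1..g. C j l * v l)) = v i"
proof -
  have "(\<Sum>j=1..g. B i j * (\<Sum>l=1..g. C j l * v l)) = (\<Sum>l=1..g. (\<Sum>j=1..g. B i j * C j l) * v l)"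
    unfolding sum_distrib_left sum_distrib_right mult.assoc by (rule sum.swap)
  also have "\<dots> = (\<Sum>l=1..g. (if i = l then v l else 0))"
    using assms unfolding is_matrix_inverse_def by (intro sum.cong refl) auto
  also have "\<dots> = v i" using assms(2) by simp
  finally show ?thesis .
qed

lemma baxter_contraction_eq_0:
  fixes B :: "nat \<Rightarrow> nat \<Rightarrow> 'a::ring_1" and V H :: "nat \<Rightarrow> 'a"
  assumes rows: "\<And>i k j l. i \<in> {1..g} \<Longrightarrow> k \<in> {1..g} \<Longrightarrow> i \<noteq> k \<Longrightarrow> j \<in> {1..g} \<Longrightarrow> l \<in> {1..g}
      \<Longrightarrow> B i j * B k l = B k l * B i j"
    and rows_V: "\<And>i k l. i \<in> {1..g} \<Longrightarrow> k \<in> {1..g} \<Longrightarrow> i \<noteq> k \<Longrightarrow> l \<in> {1..g}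
      \<Longrightarrow> V i * B k l = B k l * V i"
    and V_commute: "\<And>i k. i \<in> {1..g} \<Longrightarrow> k \<in> {1..g} \<Longrightarrow> i \<noteq> k \<Longrightarrow> V i * V k = V k * V i"
    and baxter: "\<And>i. i \<in> {1..g} \<Longrightarrow> (\<Sum>j=1..g. B i j * H j) + V i = 0"
    and pq: "p \<in> {1..g}" "q \<in> {1..g}" "p \<noteq> q"
  shows "(\<Sum>j=1..g. \<Sum>l=1..g. B q l * B p j * (H j * H l - H l * H j)) = 0"
proof -
  have BH: "(\<Sum>j=1..g. B i j * H j) = - V i" if "i \<in> {1..g}" for i
    using baxter[OF that] by (simp add: eq_neg_iff_add_eq_0)
  have "(\<Sum>j=1..g. \<Sum>l=1..g. B q l * B p j * (H j * H l))
      = (\<Sum>l=1..g. B q l * (\<Sum>j=1..g. B p j * H j) * H l)"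
    by (subst sum.swap) (simp add: sum_distrib_left sum_distrib_right mult.assoc)
  also have "\<dots> = (\<Sum>l=1..g. - V p * (B q l * H l))"
    using BH[OF pq(1)] rows_V[OF pq] by (intro sum.cong refl) (simp add: mult.assoc[symmetric])
  also have "\<dots> = - V p * (\<Sum>l=1..g. B q l * H l)"
    by (simp add: sum_distrib_left sum_negf)
  also have "\<dots> = V p * V q"
    using BH[OF pq(2)] by simp
  finally have pq_term: "(\<Sum>j=1..g. \<Sum>l=1..g. B q l * B p j * (H j * H l)) = V p * V q" .
  have "(\<Sum>j=1..g. \<Sum>l=1..g. B q l * B p j * (H l * H j))
      = (\<Sum>j=1..g. B p j * (\<Sum>l=1..g. B q l * H l) * H j)"
    using rows[OF pq(2,1) pq(3)[symmetric]]
    by (simp add: sum_distrib_left sum_distrib_right mult.assoc[symmetric])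
  also have "\<dots> = (\<Sum>j=1..g. - V q * (B p j * H j))"
    using BH[OF pq(2)] rows_V[OF pq(2,1) pq(3)[symmetric]]
    by (intro sum.cong refl) (simp add: mult.assoc[symmetric])
  also have "\<dots> = - V q * (\<Sum>j=1..g. B p j * H j)"
    by (simp add: sum_distrib_left sum_negf)
  also have "\<dots> = V q * V p"
    using BH[OF pq(1)] by simp
  finally have qp_term: "(\<Sum>j=1..g. \<Sum>l=1..g. B q l * B p j * (H l * H j)) = V q * V p" .
  have "(\<Sum>j=1..g. \<Sum>l=1..g. B q l * B p j * (H j * H l - H l * H j))
      = (\<Sum>j=1..g. \<Sum>l=1..g. B q l * B p j * (H j * H l))
        - (\<Sum>j=1..g. \<Sum>l=1..g. B q l * B p j * (H l * H j))"
    by (simp add: right_diff_distrib sum_subtractf)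
  then show ?thesis
    using pq_term qp_term V_commute[OF pq] by simp
qed

theorem baxter_solution_components_commute:
  fixes B :: "nat \<Rightarrow> nat \<Rightarrow> 'a::ring_1" and V H :: "nat \<Rightarrow> 'a"
  assumes two_torsion_free: "\<And>x::'a. x + x = 0 \<Longrightarrow> x = 0"
    and rows: "\<And>i k j l. i \<in> {1..g} \<Longrightarrow> k \<in> {1..g} \<Longrightarrow> i \<noteq> k \<Longrightarrow> j \<in> {1..g} \<Longrightarrow> l \<in> {1..g}
      \<Longrightarrow> B i j * B k l = B k l * B i j"
    and rows_V: "\<And>i k l. i \<in> {1..g} \<Longrightarrow> k \<in> {1..g} \<Longrightarrow> i \<noteq> k \<Longrightarrow> l \<in> {1..g}
      \<Longrightarrow> V i * B k l = B k l * V i"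
    and V_commute: "\<And>i k. i \<in> {1..g} \<Longrightarrow> k \<in> {1..g} \<Longrightarrow> i \<noteq> k \<Longrightarrow> V i * V k = V k * V i"
    and det_invertible: "invertible_el (nc_det g B)"
    and baxter: "\<And>i. i \<in> {1..g} \<Longrightarrow> (\<Sum>j=1..g. B i j * H j) + V i = 0"
    and ab: "a \<in> {1..g}" "b \<in> {1..g}"
  shows "H a * H b = H b * H a"
proof (cases "a = b")
  case False
  define X where "X j l = H j * H l - H l * H j" for j l
  define D where "D = nc_det g B"
  have "(\<Sum>j=1..g. \<Sum>l=1..g. nc_det g (\<lambda>i c. B i ((id(a := j, b := l)) c)) * X j l) = 0"
    unfolding X_def using rows ab False
    by (intro sum_nc_det_replace_two_columns_eq_0 baxter_contraction_eq_0[OF rows rows_V V_commute baxter])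
  moreover have "(\<Sum>j=1..g. \<Sum>l=1..g. nc_det g (\<lambda>i c. B i ((id(a := j, b := l)) c)) * X j l)
      = (\<Sum>j=1..g. \<Sum>l=1..g. (if j = a \<and> l = b then D else if j = b \<and> l = a then - D else 0) * X j l)"
    unfolding D_def using ab False
    by (intro sum.cong refl) (subst nc_det_replace_two_columns[OF two_torsion_free]; simp)
  moreover have "\<dots> = D * X a b + (- D) * X b a"
  proof -
    have "\<dots> = (\<Sum>j=1..g. (if j = a then D * X a b else 0) + (if j = b then - D * X b a else 0))"
      using ab False by (intro sum.cong refl) (auto simp: if_distrib[of "\<lambda>x. x * _"] sum.distrib cong: if_cong)
    also have "\<dots> = D * X a b + (- D) * X b a"
      using ab by (simp add: sum.distrib)
    finally show ?thesis .
  qed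
  moreover have "X b a = - X a b" unfolding X_def by simp
  ultimately have "D * X a b + D * X a b = 0" by simp
  then have "D * X a b = 0" by (rule two_torsion_free)
  then have "ring_inv D * D * X a b = 0" by (simp add: mult.assoc)
  then have "X a b = 0"
    using invertible_el_ring_inv(2)[OF det_invertible] unfolding D_def by simp
  then show ?thesis unfolding X_def by simp
qed simp

theorem theorem2:
  fixes sc :: "complex \<Rightarrow> 'a::ring_1"
    and g :: nat
    and lam mu :: "nat \<Rightarrow> 'a"
    and R :: "nat \<Rightarrow> nc_expr"
    and C :: "nat \<Rightarrow> nat \<Rightarrow> 'a"
  assumes alg: "complex_structure_map sc"
    and ll: "\<And>i j. i \<in> {1..g} \<Longrightarrow> j \<in> {1..g} \<Longrightarrow> lam i * lam j = lam j * lam i"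
    and mm: "\<And>i j. i \<in> {1..g} \<Longrightarrow> j \<in> {1..g} \<Longrightarrow> mu i * mu j = mu j * mu i"
    and lm: "\<And>i j. i \<in> {1..g} \<Longrightarrow> j \<in> {1..g} \<Longrightarrow> i \<noteq> j \<Longrightarrow> lam i * mu j = mu j * lam i"
    and wd: "\<And>i j. i \<in> {1..g} \<Longrightarrow> j \<in> {0..g} \<Longrightarrow> nc_welldef sc (R j) (lam i) (mu i)"
    and D_inv: "invertible_el (nc_det g (\<lambda>i j. nc_eval sc (R j) (lam i) (mu i)))"
    and C_inv: "is_matrix_inverse g (\<lambda>i j. nc_eval sc (R j) (lam i) (mu i)) C"
  shows "\<forall>i\<in>{1..g}. \<forall>j\<in>{1..g}.
           (let H = (\<lambda>k. - (\<Sum>l=1..g. C k l * nc_eval sc (R 0) (lam l) (mu l)))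
            in H i * H j = H j * H i)"
proof -
  define B where "B i j = nc_eval sc (R j) (lam i) (mu i)" for i j
  define H where "H k = - (\<Sum>l=1..g. C k l * B l 0)" for k
  have entries: "B i j * B k l = B k l * B i j"
    if ik: "i \<in> {1..g}" "k \<in> {1..g}" "i \<noteq> k" and jl: "j \<in> {0..g}" "l \<in> {0..g}" for i k j l
  proof -
    have "mu i * lam k = lam k * mu i" using lm[of k i] ik by simp
    then show ?thesis
      unfolding B_def using ik jl by (intro nc_eval_commute_nc_eval[OF alg] ll mm lm wd)
  qed
  have baxter: "(\<Sum>j=1..g. B i j * H j) + B i 0 = 0" if "i \<in> {1..g}" for i
    using is_matrix_inverse_mult_vector[OF C_inv that, of "\<lambda>l. B l 0"]
    unfolding H_def B_def by (simp add: sum_negf)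
  have "H i * H j = H j * H i" if "i \<in> {1..g}" "j \<in> {1..g}" for i j
  proof (rule baxter_solution_components_commute[of g B "\<lambda>i. B i 0"])
    show "x = 0" if "x + x = 0" for x :: 'a
      using complex_structure_map_add_self_eq_0[OF alg that] .
    show "invertible_el (nc_det g B)" using D_inv unfolding B_def .
  qed (use that baxter entries in auto)
  then show ?thesis unfolding H_def B_def Let_def by blast
qed

end
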